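(* Let $f:\mathbb{F}_q^k\to\mathrm{Im}(f)$ with $|\mathrm{Im}(f)|\ge 2$, and let $d_d<d_f$ be positive integers. Suppose $n$ is an integer satisfying $q^{n-k}=\sum_{i=0}^{\lfloor (d_d-1)/2\rfloor}\binom{n}{i}(q-1)^i$. Then $r_f(k:d_d,d_f)\ge n-k+1$.
   Context: $d(\cdot,\cdot)$ is Hamming distance. For $f:\mathbb{F}_q^k\to\mathrm{Im}(f)$ and integers $0\le d_d\le d_f$, an $(f\!:d_d,d_f)$-FCC with redundancy $r$ is a systematic encoding $\mathfrak{C}_f(u)=(u,p_u)\in\mathbb{F}_q^{k+r}$ with $d(\mathfrak{C}_f(u_1),\mathfrak{C}_f(u_2))\ge d_d$ whenever $u_1\ne u_2$ and $\ge d_f$ whenever $f(u_1)\ne f(u_2)$. $r_f(k:d_d,d_f)$ is the minimum $r$ for which such a code exists. *)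

theory Defs
  imports Complex_Main
begin

text \<open>Vectors over the finite field 'a of length m are represented as lists of length m.\<close>

definition words :: "nat \<Rightarrow> ('a::finite) list set" where
  "words m = {u. length u = m}"

definition hamming_dist :: "'a list \<Rightarrow> 'a list \<Rightarrow> nat" where
  "hamming_dist xs ys = card {i. i < length xs \<and> xs ! i \<noteq> ys ! i}"

text \<open>A systematic (f : dd, df)-function-correcting code with redundancy r:
  u is encoded as u @ p u, where p u has length r.\<close>

definition is_fcc ::
  "('a::{finite,field} list \<Rightarrow> 'b) \<Rightarrow> nat \<Rightarrow> nat \<Rightarrow> nat \<Rightarrow> nat \<Rightarrow> ('a list \<Rightarrow> 'a list) \<Rightarrow> bool" where
  "is_fcc f k dd df r p \<longleftrightarrow>
     (\<forall>u \<in> words k. length (p u) = r) \<and>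
     (\<forall>u1 \<in> words k. \<forall>u2 \<in> words k. u1 \<noteq> u2 \<longrightarrow>
        hamming_dist (u1 @ p u1) (u2 @ p u2) \<ge> dd) \<and>
     (\<forall>u1 \<in> words k. \<forall>u2 \<in> words k. f u1 \<noteq> f u2 \<longrightarrow>
        hamming_dist (u1 @ p u1) (u2 @ p u2) \<ge> df)"

definition optimal_redundancy ::
  "('a::{finite,field} list \<Rightarrow> 'b) \<Rightarrow> nat \<Rightarrow> nat \<Rightarrow> nat \<Rightarrow> nat" where
  "optimal_redundancy f k dd df = (LEAST r. \<exists>p. is_fcc f k dd df r p)"

end

theory Submission
  imports Defs
begin

(* Suppose an (f : dd, df)-FCC had redundancy r with N = k + r <= n, and let t = (dd - 1) div 2.
   Its q^k codewords have pairwise distance >= dd > 2t, so the radius-t Hamming balls around them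
   are disjoint. The hypothesis says that the Hamming bound for length n is met with equality;
   since V(m + 1, t) <= q V(m, t), this forces q^r <= V(N, t), so the balls fill the whole space
   and every word decodes to a codeword within distance t. Two words at distance 1 decode to
   codewords at distance <= 2t + 1 < df, which must therefore carry the same f-value. Any two
   words are joined by a path of such steps, so f would be constant, contradicting
   |Im f| >= 2. *)

lemma hamming_dist_Cons [simp]:
  "hamming_dist (a # xs) (b # ys) = (if a = b then 0 else 1) + hamming_dist xs ys"
proof -
  have "{i. i < length (a # xs) \<and> (a # xs) ! i \<noteq> (b # ys) ! i}
      = (if a = b then {} else {0}) \<union> Suc ` {i. i < length xs \<and> xs ! i \<noteq> ys ! i}"
    (is "?L = ?R")
  proof (rule set_eqI)
    fix i show "i \<in> ?L \<longleftrightarrow> i \<in> ?R"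
      by (cases i) auto
  qed
  then show ?thesis
    by (simp add: hamming_dist_def card_image)
qed

lemma hamming_dist_self [simp]: "hamming_dist xs xs = 0"
  by (simp add: hamming_dist_def)

lemma hamming_dist_eq_0_iff:
  "length xs = length ys \<Longrightarrow> hamming_dist xs ys = 0 \<longleftrightarrow> xs = ys"
  by (auto simp: hamming_dist_def intro: nth_equalityI)

lemma hamming_dist_commute:
  "length xs = length ys \<Longrightarrow> hamming_dist xs ys = hamming_dist ys xs"
  unfolding hamming_dist_def by metis

lemma hamming_dist_triangle:
  assumes "length xs = length ys"
  shows "hamming_dist xs zs \<le> hamming_dist xs ys + hamming_dist ys zs"
proof -
  let ?A = "{i. i < length xs \<and> xs ! i \<noteq> ys ! i}"
    and ?B = "{i. i < length ys \<and> ys ! i \<noteq> zs ! i}"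
  have "{i. i < length xs \<and> xs ! i \<noteq> zs ! i} \<subseteq> ?A \<union> ?B"
    using assms by auto
  then have "hamming_dist xs zs \<le> card (?A \<union> ?B)"
    unfolding hamming_dist_def by (rule card_mono[rotated]) simp
  also have "\<dots> \<le> card ?A + card ?B"
    by (rule card_Un_le)
  finally show ?thesis
    by (simp add: hamming_dist_def)
qed

lemma hamming_dist_append:
  "length xs = length xs' \<Longrightarrow>
    hamming_dist (xs @ ys) (xs' @ ys') = hamming_dist xs xs' + hamming_dist ys ys'"
proof (induction xs arbitrary: xs')
  case (Cons a xs)
  then show ?case by (cases xs') auto
qed simp

lemma hamming_dist_concat_replicate:
  "length xs = length ys \<Longrightarrow>
    hamming_dist (concat (replicate m xs)) (concat (replicate m ys)) = m * hamming_dist xs ys"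
  by (induction m) (simp_all add: hamming_dist_append)

lemma card_words: "card (words m :: 'a::finite list set) = card (UNIV :: 'a set) ^ m"
  using card_lists_length_eq[of "UNIV :: 'a set" m] by (simp add: words_def)

lemma finite_words [simp]: "finite (words m :: 'a::finite list set)"
  using finite_lists_length_eq[of "UNIV :: 'a set" m] by (simp add: words_def)

definition hamming_ball :: "'a list \<Rightarrow> nat \<Rightarrow> 'a list set" where
  "hamming_ball c t = {x. length x = length c \<and> hamming_dist c x \<le> t}"

definition ball_volume :: "nat \<Rightarrow> nat \<Rightarrow> nat \<Rightarrow> nat" where
  "ball_volume q m t = (\<Sum>i\<le>t. (m choose i) * (q - 1) ^ i)"

lemma hamming_ball_subset_words: "hamming_ball c t \<subseteq> words (length c)"
  by (auto simp: hamming_ball_def words_def)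

lemma finite_hamming_ball [simp]: "finite (hamming_ball (c :: 'a::finite list) t)"
  using finite_subset[OF hamming_ball_subset_words finite_words] .

lemma center_in_hamming_ball [simp]: "c \<in> hamming_ball c t"
  by (simp add: hamming_ball_def)

lemma hamming_ball_0: "hamming_ball c 0 = {c}"
  by (auto simp: hamming_ball_def hamming_dist_eq_0_iff)

lemma hamming_ball_Nil: "hamming_ball [] t = {[]}"
  by (auto simp: hamming_ball_def)

lemma hamming_ball_Cons_Suc:
  "hamming_ball (a # c) (Suc t) =
     Cons a ` hamming_ball c (Suc t) \<union> (\<Union>b\<in>-{a}. Cons b ` hamming_ball c t)"
    (is "?L = ?R")
proof (rule set_eqI)
  fix x
  show "x \<in> ?L \<longleftrightarrow> x \<in> ?R"
    by (cases x) (auto simp: hamming_ball_def)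
qed

lemma ball_volume_0 [simp]: "ball_volume q m 0 = 1"
  by (simp add: ball_volume_def)

lemma ball_volume_Nil [simp]: "ball_volume q 0 t = 1"
  by (induction t) (simp_all add: ball_volume_def)

lemma ball_volume_Suc_Suc:
  "ball_volume q (Suc m) (Suc t) = ball_volume q m (Suc t) + (q - 1) * ball_volume q m t"
proof -
  define w where "w = q - 1"
  have "(\<Sum>i\<le>Suc t. (Suc m choose i) * w ^ i)
      = 1 + (\<Sum>i\<le>t. (m choose Suc i) * w ^ Suc i) + (\<Sum>i\<le>t. (m choose i) * w ^ Suc i)"
    by (simp only: sum.atMost_Suc_shift binomial_Suc_Suc add_mult_distrib sum.distrib)
      simp
  also have "\<dots> = (\<Sum>i\<le>Suc t. (m choose i) * w ^ i) + w * (\<Sum>i\<le>t. (m choose i) * w ^ i)"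
    by (simp only: sum.atMost_Suc_shift[of _ t] sum_distrib_left power_Suc ac_simps) simp
  finally show ?thesis
    unfolding ball_volume_def w_def .
qed

lemma card_hamming_ball:
  "card (hamming_ball (c :: 'a::finite list) t) = ball_volume (card (UNIV :: 'a set)) (length c) t"
proof (induction c arbitrary: t)
  case Nil
  then show ?case by (simp add: hamming_ball_Nil)
next
  case (Cons a c)
  show ?case
  proof (cases t)
    case 0
    then show ?thesis by (simp add: hamming_ball_0)
  next
    case (Suc s)
    have "card (hamming_ball (a # c) (Suc s))
        = card (Cons a ` hamming_ball c (Suc s)) + card (\<Union>b\<in>-{a}. Cons b ` hamming_ball c s)"
      unfolding hamming_ball_Cons_Suc by (rule card_Un_disjoint) auto
    also have "\<dots> = card (hamming_ball c (Suc s)) + (\<Sum>b\<in>-{a}. card (hamming_ball c s))"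
      by (subst card_UN_disjoint) (auto simp: card_image)
    also have "\<dots> = ball_volume (card (UNIV :: 'a set)) (length (a # c)) (Suc s)"
      by (simp add: Cons.IH ball_volume_Suc_Suc Compl_eq_Diff_UNIV card_Diff_singleton)
    finally show ?thesis using Suc by simp
  qed
qed

lemma ball_volume_Suc_le: "ball_volume q (Suc m) t \<le> q * ball_volume q m t"
  if "0 < q"
proof (cases t)
  case (Suc s)
  have "ball_volume q (Suc m) t = ball_volume q m t + (q - 1) * ball_volume q m s"
    using Suc by (simp add: ball_volume_Suc_Suc)
  also have "\<dots> \<le> ball_volume q m t + (q - 1) * ball_volume q m t"
    using Suc by (simp add: ball_volume_def)
  also have "\<dots> = q * ball_volume q m t"
    using that by (cases q) simp_all
  finally show ?thesis .
qed (use that in simp)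

lemma ball_volume_add_le: "ball_volume q (m + d) t \<le> q ^ d * ball_volume q m t"
  if "0 < q"
proof (induction d)
  case (Suc d)
  have "ball_volume q (m + Suc d) t \<le> q * ball_volume q (m + d) t"
    using ball_volume_Suc_le[OF that] by simp
  also have "\<dots> \<le> q ^ Suc d * ball_volume q m t"
    using Suc by simp
  finally show ?case .
qed simp

lemma of_nat_ball_volume:
  "0 < q \<Longrightarrow> real (ball_volume q m t) = (\<Sum>i = 0..t. real (m choose i) * (real q - 1) ^ i)"
  by (simp add: ball_volume_def atLeast0AtMost of_nat_diff)

lemma hamming_dist_centers_le:
  assumes "x \<in> hamming_ball c t" "y \<in> hamming_ball c' t" "length c = length c'"
  shows "hamming_dist c c' \<le> 2 * t + hamming_dist x y"
proof -
  have "hamming_dist c c' \<le> hamming_dist c x + hamming_dist x c'"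
    using assms by (intro hamming_dist_triangle) (simp add: hamming_ball_def)
  also have "\<dots> \<le> hamming_dist c x + (hamming_dist x y + hamming_dist y c')"
    using assms by (intro add_left_mono hamming_dist_triangle) (simp add: hamming_ball_def)
  also have "hamming_dist y c' = hamming_dist c' y"
    using assms by (intro hamming_dist_commute) (simp add: hamming_ball_def)
  finally show ?thesis
    using assms by (simp add: hamming_ball_def)
qed

lemma hamming_balls_disjoint:
  assumes "length c = length c'" "2 * t < hamming_dist c c'"
  shows "hamming_ball c t \<inter> hamming_ball c' t = {}"
proof -
  have "hamming_dist c c' \<le> 2 * t" if "x \<in> hamming_ball c t" "x \<in> hamming_ball c' t" for x
    using hamming_dist_centers_le[OF that assms(1)] by simp
  with assms(2) show ?thesis
    by (meson disjoint_iff not_le)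
qed

lemma hamming_balls_cover_if_volume_ge:
  fixes C :: "'a::finite list set"
  assumes "C \<subseteq> words N"
    and separated: "\<And>c c'. c \<in> C \<Longrightarrow> c' \<in> C \<Longrightarrow> c \<noteq> c' \<Longrightarrow> 2 * t < hamming_dist c c'"
    and volume: "card (UNIV :: 'a set) ^ N \<le> card C * ball_volume (card (UNIV :: 'a set)) N t"
  shows "words N \<subseteq> (\<Union>c\<in>C. hamming_ball c t)"
proof -
  have len: "length c = N" if "c \<in> C" for c
    using assms(1) that by (auto simp: words_def)
  have finite_C: "finite C"
    using assms(1) finite_words by (rule finite_subset)
  have balls_subset: "(\<Union>c\<in>C. hamming_ball c t) \<subseteq> words N"
    using len by (auto simp: hamming_ball_def words_def)
  have "card (\<Union>c\<in>C. hamming_ball c t) = (\<Sum>c\<in>C. card (hamming_ball c t))"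
  proof (rule card_UN_disjoint)
    show "\<forall>c\<in>C. \<forall>c'\<in>C. c \<noteq> c' \<longrightarrow> hamming_ball c t \<inter> hamming_ball c' t = {}"
      by (intro ballI impI hamming_balls_disjoint) (simp_all add: len separated)
  qed (use finite_C in simp_all)
  also have "\<dots> = card C * ball_volume (card (UNIV :: 'a set)) N t"
    using len by (simp add: card_hamming_ball)
  finally have "card (words N :: 'a list set) \<le> card (\<Union>c\<in>C. hamming_ball c t)"
    using volume by (simp add: card_words)
  then have "(\<Union>c\<in>C. hamming_ball c t) = words N"
    by (rule card_seteq[OF finite_words balls_subset])
  then show ?thesis
    by (rule equalityD2)
qed

lemma locally_constant_on_words:
  assumes "\<And>x y. x \<in> words N \<Longrightarrow> y \<in> words N \<Longrightarrow> hamming_dist x y \<le> 1 \<Longrightarrow> g x = g y"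
    and "x \<in> words N" "y \<in> words N"
  shows "g x = g y"
  using assms
proof (induction N arbitrary: g x y)
  case 0
  then show ?case by (simp add: words_def)
next
  case (Suc N)
  obtain a x' where x: "x = a # x'" "x' \<in> words N"
    using Suc.prems(2) by (cases x) (auto simp: words_def)
  obtain b y' where y: "y = b # y'" "y' \<in> words N"
    using Suc.prems(3) by (cases y) (auto simp: words_def)
  have "g (a # x') = g (a # y')"
  proof (rule Suc.IH[where g = "\<lambda>z. g (a # z)"])
    fix u v :: "'a list"
    assume "u \<in> words N" "v \<in> words N" "hamming_dist u v \<le> 1"
    then show "g (a # u) = g (a # v)"
      using Suc.prems(1)[of "a # u" "a # v"] by (simp add: words_def)
  qed (use x y in simp_all)
  also have "\<dots> = g (b # y')"
    using Suc.prems(1)[of "a # y'" "b # y'"] y by (simp add: words_def)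
  finally show ?case
    using x y by simp
qed

lemma is_fcc_repetition:
  assumes "dd \<le> df"
  shows "is_fcc f k dd df (df * k) (\<lambda>u. concat (replicate df u))"
proof -
  have separated:
    "df \<le> hamming_dist (u1 @ concat (replicate df u1)) (u2 @ concat (replicate df u2))"
    if "u1 \<in> words k" "u2 \<in> words k" "u1 \<noteq> u2" for u1 u2
  proof -
    have "length u1 = length u2"
      using that by (simp add: words_def)
    then have "hamming_dist (u1 @ concat (replicate df u1)) (u2 @ concat (replicate df u2))
        = Suc df * hamming_dist u1 u2" and "hamming_dist u1 u2 \<noteq> 0"
      using that(3) by (simp_all add: hamming_dist_append hamming_dist_concat_replicate
          hamming_dist_eq_0_iff)
    then show ?thesis
      by (cases "hamming_dist u1 u2") simp_all
  qed
  show ?thesis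
    unfolding is_fcc_def
  proof (intro conjI ballI impI)
    fix u :: "'a list"
    assume "u \<in> words k"
    then show "length (concat (replicate df u)) = df * k"
      by (simp add: words_def length_concat sum_list_replicate)
  next
    fix u1 u2 :: "'a list"
    assume "u1 \<in> words k" "u2 \<in> words k" "u1 \<noteq> u2"
    then show "dd \<le> hamming_dist (u1 @ concat (replicate df u1)) (u2 @ concat (replicate df u2))"
      using separated assms by (meson le_trans)
  next
    fix u1 u2 :: "'a list"
    assume "u1 \<in> words k" "u2 \<in> words k" "f u1 \<noteq> f u2"
    then show "df \<le> hamming_dist (u1 @ concat (replicate df u1)) (u2 @ concat (replicate df u2))"
      using separated by blast
  qed
qed

lemma optimal_redundancy_attained:
  assumes "dd \<le> df"
  shows "\<exists>p. is_fcc f k dd df (optimal_redundancy f k dd df) p"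
  unfolding optimal_redundancy_def
  by (rule LeastI[of _ "df * k"]) (use is_fcc_repetition[OF assms] in blast)

lemma fcc_constant_if_balls_cover:
  fixes f :: "'a::{finite,field} list \<Rightarrow> 'b"
  assumes fcc: "is_fcc f k dd df r p" and "0 < dd" "dd < df"
    and cover: "words (k + r) \<subseteq> (\<Union>u\<in>words k. hamming_ball (u @ p u) ((dd - 1) div 2))"
    and "u \<in> words k" "v \<in> words k"
  shows "f u = f v"
proof -
  define t where "t = (dd - 1) div 2"
  have codeword: "u @ p u \<in> words (k + r)" if "u \<in> words k" for u
    using fcc that by (simp add: is_fcc_def words_def)
  have same_value: "f u = f v"
    if "u \<in> words k" "v \<in> words k" "x \<in> hamming_ball (u @ p u) t" "y \<in> hamming_ball (v @ p v) t"
      and "hamming_dist x y \<le> 1" for u v x y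
  proof (rule ccontr)
    assume "f u \<noteq> f v"
    then have "df \<le> hamming_dist (u @ p u) (v @ p v)"
      using fcc that(1,2) by (simp add: is_fcc_def)
    moreover have "hamming_dist (u @ p u) (v @ p v) \<le> 2 * t + 1"
      using hamming_dist_centers_le[OF that(3,4)] codeword[OF that(1)] codeword[OF that(2)] that(5)
      by (simp add: words_def)
    ultimately show False
      using \<open>0 < dd\<close> \<open>dd < df\<close> unfolding t_def by linarith
  qed
  define decode where "decode x = (SOME u. u \<in> words k \<and> x \<in> hamming_ball (u @ p u) t)" for x
  have decode: "decode x \<in> words k \<and> x \<in> hamming_ball (decode x @ p (decode x)) t"
    if "x \<in> words (k + r)" for x
    unfolding decode_def by (rule someI_ex) (use cover that in \<open>auto simp: t_def\<close>)
  have decode_codeword: "f (decode (u @ p u)) = f u" if "u \<in> words k" for u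
    using same_value[of "decode (u @ p u)" u "u @ p u" "u @ p u"] decode[OF codeword[OF that]] that
    by simp
  have "f (decode (u @ p u)) = f (decode (v @ p v))"
  proof (rule locally_constant_on_words[where g = "\<lambda>x. f (decode x)" and N = "k + r"])
    show "f (decode x) = f (decode y)"
      if "x \<in> words (k + r)" "y \<in> words (k + r)" "hamming_dist x y \<le> 1" for x y
      using same_value decode that by blast
  qed (use codeword assms(5,6) in simp_all)
  then show ?thesis
    using decode_codeword assms(5,6) by simp
qed

lemma fcc_strict_hamming_bound:
  fixes f :: "'a::{finite,field} list \<Rightarrow> 'b"
  assumes fcc: "is_fcc f k dd df r p" and nonconstant: "2 \<le> card (f ` words k)"
    and "0 < dd" "dd < df"
  shows "ball_volume (card (UNIV :: 'a set)) (k + r) ((dd - 1) div 2) < card (UNIV :: 'a set) ^ r"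
proof (rule ccontr)
  define q where "q = card (UNIV :: 'a set)"
  define t where "t = (dd - 1) div 2"
  define C where "C = (\<lambda>u. u @ p u) ` words k"
  assume "\<not> ball_volume (card (UNIV :: 'a set)) (k + r) ((dd - 1) div 2) < card (UNIV :: 'a set) ^ r"
  then have volume: "q ^ r \<le> ball_volume q (k + r) t"
    by (simp add: q_def t_def)
  have "inj_on (\<lambda>u. u @ p u) (words k)"
    by (rule inj_onI) (simp add: words_def append_eq_append_conv)
  then have card_C: "card C = q ^ k"
    by (simp add: C_def card_image card_words q_def)
  have "C \<subseteq> words (k + r)"
    using fcc by (auto simp: C_def is_fcc_def words_def)
  moreover have "2 * t < hamming_dist c c'"
    if codewords: "c \<in> C" "c' \<in> C" "c \<noteq> c'" for c c'
  proof -
    obtain u v where "u \<in> words k" "v \<in> words k" "u \<noteq> v" "c = u @ p u" "c' = v @ p v"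
      using codewords unfolding C_def by blast
    then have "dd \<le> hamming_dist c c'"
      using fcc by (simp add: is_fcc_def)
    then show ?thesis
      using \<open>0 < dd\<close> unfolding t_def by linarith
  qed
  moreover have "q ^ (k + r) \<le> card C * ball_volume q (k + r) t"
    using volume card_C by (simp add: power_add)
  ultimately have "words (k + r) \<subseteq> (\<Union>c\<in>C. hamming_ball c t)"
    unfolding q_def by (rule hamming_balls_cover_if_volume_ge)
  then have f_constant: "f u = f v" if "u \<in> words k" "v \<in> words k" for u v
    using fcc_constant_if_balls_cover[OF fcc \<open>0 < dd\<close> \<open>dd < df\<close> _ that]
    by (simp add: C_def t_def)
  have "card (f ` words k) \<le> Suc 0"
    unfolding card_le_Suc0_iff_eq[OF finite_imageI[OF finite_words]] using f_constant by blast
  with nonconstant show False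
    by linarith
qed

lemma fcc_length_gt_if_hamming_bound_tight:
  fixes f :: "'a::{finite,field} list \<Rightarrow> 'b"
  assumes fcc: "is_fcc f k dd df r p" and "2 \<le> card (f ` words k)" and "0 < dd" "dd < df"
    and tight: "card (UNIV :: 'a set) ^ (n - k)
      = ball_volume (card (UNIV :: 'a set)) n ((dd - 1) div 2)"
  shows "n < k + r"
proof (rule ccontr)
  define q where "q = card (UNIV :: 'a set)"
  define t where "t = (dd - 1) div 2"
  have "0 < q"
    by (simp add: q_def finite_UNIV_card_ge_0)
  assume "\<not> n < k + r"
  then obtain d where n: "n = (k + r) + d"
    using le_Suc_ex not_less by blast
  have "ball_volume q n t \<le> q ^ d * ball_volume q (k + r) t"
    unfolding n using \<open>0 < q\<close> by (rule ball_volume_add_le)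
  also have "\<dots> < q ^ d * q ^ r"
    using fcc_strict_hamming_bound[OF assms(1-4)] \<open>0 < q\<close> by (simp add: q_def t_def)
  also have "\<dots> = q ^ (n - k)"
    by (simp add: n power_add)
  finally show False
    using tight by (simp add: q_def t_def)
qed

theorem corollary5:
  fixes f :: "'a::{finite,field} list \<Rightarrow> 'b"
    and k dd df n :: nat
  assumes "card (f ` words k) \<ge> 2"
    and "0 < dd" and "dd < df"
    and "(real (card (UNIV :: 'a set))) powi (int n - int k)
           = (\<Sum>i = 0..(dd - 1) div 2. real (n choose i) * (real (card (UNIV :: 'a set)) - 1) ^ i)"
  shows "int (optimal_redundancy f k dd df) \<ge> int n - int k + 1"
proof (cases "k \<le> n")
  case True
  define q where "q = card (UNIV :: 'a set)"
  have "0 < q"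
    by (simp add: q_def finite_UNIV_card_ge_0)
  have "real (q ^ (n - k)) = real (ball_volume q n ((dd - 1) div 2))"
    using assms(4) True \<open>0 < q\<close>
    by (simp add: q_def of_nat_ball_volume of_nat_diff flip: power_int_of_nat)
  then have tight: "q ^ (n - k) = ball_volume q n ((dd - 1) div 2)"
    by (simp only: of_nat_eq_iff)
  obtain p where "is_fcc f k dd df (optimal_redundancy f k dd df) p"
    using optimal_redundancy_attained assms(3) by (meson less_imp_le)
  from fcc_length_gt_if_hamming_bound_tight[OF this assms(1-3) tight[unfolded q_def]]
  show ?thesis
    by simp
qed simp

end
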